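(* Let $X\in\mathbb{R}^{N\times d}$, $W\in\mathbb{R}^{d\times m}$, $\Phi=\sigma(XW)$, and let $A\in\mathbb{R}^{m\times m}$ have all entries $A_{ij}\ge0$. Let $\gamma>0$ satisfy $\|A\|<\gamma^{-1}$. Then the unique solution $Z$ of $Z=\sigma(\gamma ZA+\Phi)$ is $Z=\Phi(I_m-\gamma A)^{-1}$.
   Context: $\sigma(u)=\max\{0,u\}$ applied entrywise; $\|\cdot\|$ is the spectral norm. *)

theory Defs
  imports "HOL-Analysis.Analysis"
begin

definition relu_mat :: "real^'m^'n \<Rightarrow> real^'m^'n" where
  "relu_mat M = (\<chi> i j. max 0 (M $ i $ j))"

definition spec_norm :: "real^'m^'n \<Rightarrow> real" where
  "spec_norm A = onorm (\<lambda>v. A *v v)"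

end

theory Submission
  imports Defs
begin

text \<open>
  Write \<open>B = \<gamma> A\<close>, a nonnegative matrix with \<open>\<parallel>B\<parallel> < 1\<close>. A row vector \<open>x \<ge> 0\<close> with
  \<open>x \<le> x B\<close> entrywise must vanish, because the Euclidean norm is monotone on nonnegative
  vectors: \<open>\<parallel>x\<parallel> \<le> \<parallel>x B\<parallel> \<le> \<parallel>B\<parallel> \<parallel>x\<parallel>\<close>. Applied to the negative
  part of a row of \<open>N = (I - B)\<^sup>-\<^sup>1\<close>, which satisfies \<open>N = I + N B\<close>, it shows \<open>N \<ge> 0\<close>; hence
  \<open>Z\<^sub>0 = \<Phi> N\<close> is nonnegative and solves \<open>Z\<^sub>0 = Z\<^sub>0 B + \<Phi>\<close>, so it is a fixed point of
  \<open>Z \<mapsto> \<sigma>(Z B + \<Phi>)\<close>. Since \<open>\<sigma>\<close> is 1-Lipschitz, the entrywise distance \<open>\<bar>Z - Z'\<bar>\<close> of two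
  fixed points satisfies \<open>\<bar>Z - Z'\<bar> \<le> \<bar>Z - Z'\<bar> B\<close> row by row, so they coincide.
\<close>

lemma relu_mat_nth [simp]: "relu_mat M $ i $ j = max 0 (M $ i $ j)"
  by (simp add: relu_mat_def)

lemma abs_max_0_diff_le: "\<bar>max 0 a - max 0 b\<bar> \<le> \<bar>a - b :: real\<bar>"
  by linarith

lemma matrix_mult_row: "(A ** B) $ i = A $ i v* B"
  by (simp add: vec_eq_iff matrix_matrix_mult_def vector_matrix_mult_def)

lemma matrix_mul_mat_1_minus:
  fixes A :: "'a::ring_1^'m^'n"
  shows "A ** (mat 1 - B) = A - A ** B"
  using matrix_add_ldistrib[of A "mat 1 - B" B] by (simp add: algebra_simps)

lemma spec_norm_nonneg: "0 \<le> spec_norm A"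
  unfolding spec_norm_def by (rule onorm_pos_le) simp

lemma spec_norm_scaleR: "spec_norm (c *\<^sub>R A) = \<bar>c\<bar> * spec_norm A"
  unfolding spec_norm_def scaleR_matrix_vector_assoc[symmetric]
  by (rule onorm_scaleR) simp

lemma norm_matrix_vector_le_spec_norm: "norm (A *v v) \<le> spec_norm A * norm v"
  unfolding spec_norm_def by (rule onorm) simp

text \<open>The transpose has the same operator norm, since \<open>\<parallel>x A\<parallel>\<^sup>2 = \<langle>x, A (x A)\<rangle>\<close>.\<close>
lemma norm_vector_matrix_le_spec_norm:
  fixes A :: "real^'m^'n"
  shows "norm (x v* A) \<le> spec_norm A * norm x"
proof (cases "x v* A = 0")
  case False
  have "norm (x v* A) * norm (x v* A) = x \<bullet> (A *v (x v* A))"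
    by (simp flip: dot_lmul_matrix add: dot_square_norm power2_eq_square)
  also have "\<dots> \<le> norm x * norm (A *v (x v* A))"
    by (rule Cauchy_Schwarz_ineq2[THEN abs_le_D1])
  also have "\<dots> \<le> norm x * (spec_norm A * norm (x v* A))"
    by (intro mult_left_mono norm_matrix_vector_le_spec_norm) simp
  finally show ?thesis
    using False by (simp add: algebra_simps)
qed (simp add: spec_norm_nonneg)

lemma eq_0_if_norm_le_contraction:
  assumes "norm x \<le> c * norm x" and "c < 1"
  shows "x = 0"
proof -
  from assms have "norm x = 0"
    by (smt (verit) mult_le_cancel_right1 norm_ge_zero)
  then show ?thesis by simp
qed

lemma nonneg_subinvariant_eq_0:
  fixes A :: "real^'n^'n"
  assumes "spec_norm A < 1" and "\<And>j. 0 \<le> x $ j" and "\<And>j. x $ j \<le> (x v* A) $ j"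
  shows "x = 0"
proof -
  have "norm x \<le> norm (x v* A)"
  proof (rule norm_le_componentwise_cart)
    show "norm (x $ j) \<le> norm ((x v* A) $ j)" for j
      using assms(2,3)[of j] by simp
  qed
  also have "\<dots> \<le> spec_norm A * norm x"
    by (rule norm_vector_matrix_le_spec_norm)
  finally show ?thesis
    using assms(1) by (rule eq_0_if_norm_le_contraction)
qed

lemma superinvariant_nonneg:
  fixes A :: "real^'n^'n"
  assumes A_nonneg: "\<And>i j. 0 \<le> A $ i $ j" and "spec_norm A < 1"
    and super: "\<And>j. (y v* A) $ j \<le> y $ j"
  shows "0 \<le> y $ j"
proof -
  define x where "x = (\<chi> j. max 0 (- y $ j))"
  have "x = 0"
  proof (rule nonneg_subinvariant_eq_0[OF \<open>spec_norm A < 1\<close>])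
    show "0 \<le> x $ j" for j by (simp add: x_def)
    show "x $ j \<le> (x v* A) $ j" for j
    proof -
      have "- y $ j \<le> (\<Sum>k\<in>UNIV. - y $ k * A $ k $ j)"
        using super[of j] by (simp add: vector_matrix_mult_def sum_negf)
      also have "\<dots> \<le> (\<Sum>k\<in>UNIV. x $ k * A $ k $ j)"
        by (intro sum_mono mult_right_mono A_nonneg) (simp add: x_def)
      finally have "- y $ j \<le> (x v* A) $ j"
        by (simp add: vector_matrix_mult_def)
      moreover have "0 \<le> (x v* A) $ j"
        unfolding vector_matrix_mult_def
        by (simp, intro sum_nonneg mult_nonneg_nonneg A_nonneg) (simp add: x_def)
      ultimately show ?thesis by (simp add: x_def)
    qed
  qed
  then have "max 0 (- y $ j) = 0"
    by (simp add: x_def flip: vec_lambda_beta[of "\<lambda>j. max 0 (- y $ j)" j])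
  then show ?thesis by linarith
qed

lemma invertible_mat_1_minus:
  fixes A :: "real^'n^'n"
  assumes "spec_norm A < 1"
  shows "invertible (mat 1 - A)"
  unfolding invertible_left_inverse matrix_left_invertible_ker
proof (intro allI impI)
  fix x assume "(mat 1 - A) *v x = 0"
  then have "x = A *v x" by (simp add: algebra_simps)
  then have "norm x \<le> spec_norm A * norm x"
    by (metis norm_matrix_vector_le_spec_norm)
  then show "x = 0"
    using assms by (rule eq_0_if_norm_le_contraction)
qed

lemma matrix_inv_left:
  assumes "invertible A"
  shows "matrix_inv A ** A = mat 1"
  using someI_ex[OF assms[unfolded invertible_def]] by (simp add: matrix_inv_def)

lemma matrix_inv_mat_1_minus_nonneg:
  fixes A :: "real^'n^'n"
  assumes A_nonneg: "\<And>i j. 0 \<le> A $ i $ j" and "spec_norm A < 1"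
  shows "0 \<le> matrix_inv (mat 1 - A) $ i $ j"
proof -
  define N where "N = matrix_inv (mat 1 - A)"
  have "N ** (mat 1 - A) = mat 1"
    unfolding N_def by (rule matrix_inv_left[OF invertible_mat_1_minus[OF assms(2)]])
  then have N_eq: "N = mat 1 + N ** A"
    by (simp add: matrix_mul_mat_1_minus algebra_simps)
  have "(N $ i v* A) $ j \<le> N $ i $ j" for j
    by (subst (2) N_eq) (simp add: matrix_mult_row mat_def)
  then show ?thesis
    unfolding N_def by (rule superinvariant_nonneg[OF assms])
qed

lemma relu_mat_fixed_point_unique:
  fixes B :: "real^'m^'m" and Z Z' \<Phi> :: "real^'m^'n"
  assumes B_nonneg: "\<And>i j. 0 \<le> B $ i $ j" and "spec_norm B < 1"
    and Z: "Z = relu_mat (Z ** B + \<Phi>)" and Z': "Z' = relu_mat (Z' ** B + \<Phi>)"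
  shows "Z = Z'"
proof -
  have "(\<chi> j. \<bar>Z $ i $ j - Z' $ i $ j\<bar>) = 0" (is "?d = 0") for i
  proof (rule nonneg_subinvariant_eq_0[OF \<open>spec_norm B < 1\<close>])
    show "0 \<le> ?d $ j" for j by simp
    show "?d $ j \<le> (?d v* B) $ j" for j
    proof -
      have "Z $ i $ j = max 0 ((Z ** B) $ i $ j + \<Phi> $ i $ j)"
        by (subst Z) simp
      moreover have "Z' $ i $ j = max 0 ((Z' ** B) $ i $ j + \<Phi> $ i $ j)"
        by (subst Z') simp
      ultimately have "?d $ j \<le> \<bar>(Z ** B) $ i $ j - (Z' ** B) $ i $ j\<bar>"
        using abs_max_0_diff_le by simp
      also have "\<dots> = \<bar>\<Sum>k\<in>UNIV. (Z $ i $ k - Z' $ i $ k) * B $ k $ j\<bar>"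
        by (simp add: matrix_matrix_mult_def sum_subtractf[symmetric] algebra_simps)
      also have "\<dots> \<le> (\<Sum>k\<in>UNIV. \<bar>Z $ i $ k - Z' $ i $ k\<bar> * B $ k $ j)"
        using sum_abs[of "\<lambda>k. (Z $ i $ k - Z' $ i $ k) * B $ k $ j" UNIV] B_nonneg
        by (simp add: abs_mult)
      finally show ?thesis by (simp add: vector_matrix_mult_def)
    qed
  qed
  then show ?thesis by (simp add: vec_eq_iff)
qed

lemma relu_mat_fixed_point_iff:
  fixes B :: "real^'m^'m" and Z \<Phi> :: "real^'m^'n"
  assumes B_nonneg: "\<And>i j. 0 \<le> B $ i $ j" and "spec_norm B < 1"
    and \<Phi>_nonneg: "\<And>i j. 0 \<le> \<Phi> $ i $ j"
  shows "Z = relu_mat (Z ** B + \<Phi>) \<longleftrightarrow> Z = \<Phi> ** matrix_inv (mat 1 - B)"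
proof -
  define Z\<^sub>0 where "Z\<^sub>0 = \<Phi> ** matrix_inv (mat 1 - B)"
  have "Z\<^sub>0 ** (mat 1 - B) = \<Phi>"
    using matrix_inv_left[OF invertible_mat_1_minus[OF assms(2)]]
    by (simp add: Z\<^sub>0_def flip: matrix_mul_assoc)
  then have "Z\<^sub>0 ** B + \<Phi> = Z\<^sub>0"
    by (simp add: matrix_mul_mat_1_minus algebra_simps)
  moreover have "0 \<le> Z\<^sub>0 $ i $ j" for i j
    unfolding Z\<^sub>0_def matrix_matrix_mult_def
    by (simp, intro sum_nonneg mult_nonneg_nonneg \<Phi>_nonneg
        matrix_inv_mat_1_minus_nonneg[OF B_nonneg assms(2)])
  ultimately have "Z\<^sub>0 = relu_mat (Z\<^sub>0 ** B + \<Phi>)"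
    by (simp add: vec_eq_iff)
  then show ?thesis
    unfolding Z\<^sub>0_def[symmetric]
    using relu_mat_fixed_point_unique[OF B_nonneg assms(2)] by metis
qed

theorem lemma5:
  fixes X :: "real^'d^'N" and W :: "real^'m^'d" and A :: "real^'m^'m" and \<gamma> :: real
  assumes "\<And>i j. A $ i $ j \<ge> 0"
    and "\<gamma> > 0"
    and "spec_norm A < inverse \<gamma>"
  shows "invertible (mat 1 - \<gamma> *\<^sub>R A) \<and>
    (\<forall>Z :: real^'m^'N.
        Z = relu_mat (\<gamma> *\<^sub>R (Z ** A) + relu_mat (X ** W)) \<longleftrightarrow>
        Z = relu_mat (X ** W) ** matrix_inv (mat 1 - \<gamma> *\<^sub>R A))"
proof -
  have B_nonneg: "0 \<le> (\<gamma> *\<^sub>R A) $ i $ j" for i j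
    using assms(1,2) by simp
  have "spec_norm (\<gamma> *\<^sub>R A) = \<gamma> * spec_norm A"
    using assms(2) by (simp add: spec_norm_scaleR)
  also have "\<dots> < \<gamma> * inverse \<gamma>"
    by (intro mult_strict_left_mono assms(2,3))
  also have "\<dots> = 1"
    using assms(2) by simp
  finally have contraction: "spec_norm (\<gamma> *\<^sub>R A) < 1" .
  have "Z ** (\<gamma> *\<^sub>R A) = \<gamma> *\<^sub>R (Z ** A)" for Z :: "real^'m^'N"
    by (simp add: vec_eq_iff matrix_matrix_mult_def sum_distrib_left algebra_simps)
  then show ?thesis
    using invertible_mat_1_minus[OF contraction]
      relu_mat_fixed_point_iff[OF B_nonneg contraction, of "relu_mat (X ** W)"]
    by simp
qed

end
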